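(* The only novel partition of length $5$ is $(2,1,1,1,1)$.
   Context: An integer partition is $\lambda=(\lambda_1,\dots,\lambda_k)$ with integers $\lambda_1\ge\dots\ge\lambda_k\ge 1$; $k$ is its length. For $v\in\mathbb{Z}^k$ let $v^{\perp B}=\{x\in\{-1,1\}^k: v\cdot x=0\}$; $\lambda^{\perp B}$ is this set for $(\lambda_1,\dots,\lambda_k)$. $V_\lambda\subset\mathbb{Z}^k$ is the set of vectors obtained from $(\lambda_1,\dots,\lambda_k)$ by permuting coordinates and changing signs of some coordinates, with first coordinate positive. For $I\subset\{1,\dots,m\}$, $\mathrm{Proj}_I:\{-1,1\}^m\to\{-1,1\}^{|I|}$ keeps the coordinates indexed by $I$. Reduction: for partitions $\mu$ of length $m$ and $\lambda$ of length $k\le m$, $\mu\Rightarrow\lambda$ iff there exist $I\subset\{1,\dots,m\}$, $|I|=k$, and $v\in V_\lambda$ with $\mathrm{Proj}_I(\mu^{\perp B})\subset v^{\perp B}$. $\mu$ strictly reduces to $\lambda$ iff $\mu\Rightarrow\lambda$ and not $\lambda\Rightarrow\mu$. Partitions $\lambda,\mu$ of the same length are equivalent iff there is $w\in V_\mu$ with $\lambda^{\perp B}=w^{\perp B}$. A partition $\lambda$ is novel iff $\lambda^{\perp B}\neq\emptyset$, $\lambda$ strictly reduces to no partition, and $\lambda$ is lexicographically smallest among partitions equivalent to it. *)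

theory Defs
  imports Main "HOL-Library.Multiset"
begin

definition is_partition :: "int list \<Rightarrow> bool" where
  "is_partition l \<longleftrightarrow> l \<noteq> [] \<and> sorted_wrt (\<ge>) l \<and> (\<forall>x\<in>set l. x \<ge> 1)"

definition signs :: "nat \<Rightarrow> int list set" where
  "signs k = {x. length x = k \<and> set x \<subseteq> {-1, 1}}"

definition dotp :: "int list \<Rightarrow> int list \<Rightarrow> int" where
  "dotp v x = sum_list (map2 (*) v x)"

definition perpB :: "int list \<Rightarrow> int list set" where
  "perpB v = {x \<in> signs (length v). dotp v x = 0}"

definition Vset :: "int list \<Rightarrow> int list set" where
  "Vset l = {v. length v = length l \<and> mset (map abs v) = mset l \<and> v \<noteq> [] \<and> hd v > 0}"

text \<open>Proj_I keeps the coordinates indexed by I (0-based indices, original order).\<close>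
definition Proj :: "nat set \<Rightarrow> int list \<Rightarrow> int list" where
  "Proj I x = nths x I"

definition reduces :: "int list \<Rightarrow> int list \<Rightarrow> bool" (infix "\<Rrightarrow>" 50) where
  "reduces mu l \<longleftrightarrow> length l \<le> length mu \<and>
     (\<exists>I. I \<subseteq> {..<length mu} \<and> card I = length l \<and>
        (\<exists>v\<in>Vset l. Proj I ` perpB mu \<subseteq> perpB v))"

definition strictly_reduces :: "int list \<Rightarrow> int list \<Rightarrow> bool" where
  "strictly_reduces mu l \<longleftrightarrow> reduces mu l \<and> \<not> reduces l mu"

definition equivalent :: "int list \<Rightarrow> int list \<Rightarrow> bool" where
  "equivalent l mu \<longleftrightarrow> length l = length mu \<and> (\<exists>w\<in>Vset mu. perpB l = perpB w)"

definition lex_le :: "int list \<Rightarrow> int list \<Rightarrow> bool" where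
  "lex_le a b \<longleftrightarrow> a = b \<or> (a, b) \<in> lexord {(x, y). x < y}"

definition novel :: "int list \<Rightarrow> bool" where
  "novel l \<longleftrightarrow> is_partition l \<and> perpB l \<noteq> {} \<and>
     \<not> (\<exists>mu. is_partition mu \<and> strictly_reduces l mu) \<and>
     (\<forall>mu. is_partition mu \<and> length mu = length l \<and> equivalent l mu \<longrightarrow> lex_le l mu)"

end

theory Submission
  imports Defs
begin

(* A partition \<lambda> with five parts fails to be novel as soon as two of its coordinates have a
   constant sign product on \<lambda>^\<perp>B: projecting onto these two coordinates exhibits a strict
   reduction to (1,1) (lemma pair_reduction, valid for any length > 2). Elementary sign
   bookkeeping shows such a pair exists unless \<lambda> = b(2,1,1,1,1) (forced_pair5). Since multiples
   of a partition have the same balanced sign vectors, b(2,1,1,1,1) is equivalent to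
   (2,1,1,1,1), and lexicographic minimality forces b = 1 (novel_length5_unique).

   Conversely, (2,1,1,1,1) is novel: four explicit balanced sign vectors show that any
   reduction to a partition with five parts goes to a multiple of (2,1,1,1,1), which reduces
   back, and that no reduction to fewer parts exists (novel_2_1_1_1_1). *)

lemma nths_singleton_index: "i < length xs \<Longrightarrow> nths xs {i} = [xs ! i]"
proof (induction xs arbitrary: i)
  case (Cons a xs)
  then show ?case by (cases i) (simp_all add: nths_Cons)
qed simp

lemma nths_pair: "i < j \<Longrightarrow> j < length xs \<Longrightarrow> nths xs {i, j} = [xs ! i, xs ! j]"
proof (induction xs arbitrary: i j)
  case (Cons a xs)
  show ?case
  proof (cases i)
    case 0
    then have "{k. Suc k \<in> {i, j}} = {j - 1}" using Cons.prems by auto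
    then show ?thesis using 0 Cons.prems by (simp add: nths_Cons nths_singleton_index nth_Cons')
  next
    case (Suc i')
    then have "{k. Suc k \<in> {i, j}} = {i', j - 1}" using Cons.prems by auto
    then show ?thesis using Suc Cons by (simp add: nths_Cons nth_Cons')
  qed
qed simp

lemma Proj_all: "Proj {..<length x} x = x"
  by (simp add: Proj_def)

lemma dotp_scale: "dotp (map ((*) t) v) x = t * dotp v x"
  unfolding dotp_def
proof (induction v arbitrary: x)
  case (Cons a v)
  then show ?case by (cases x) (simp_all add: algebra_simps)
qed simp

lemma perpB_scale: "t \<noteq> 0 \<Longrightarrow> perpB (map ((*) t) v) = perpB v"
  by (simp add: perpB_def dotp_scale)

lemma sorted_desc_mset_unique:
  fixes xs ys :: "'a::linorder list"
  assumes "sorted_wrt (\<ge>) xs" "sorted_wrt (\<ge>) ys" "mset xs = mset ys"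
  shows "xs = ys"
proof -
  have "sorted (rev xs)" "sorted (rev ys)" using assms(1,2) by (simp_all add: sorted_wrt_rev)
  moreover have "mset (rev xs) = mset (rev ys)" using assms(3) by simp
  ultimately have "rev xs = rev ys" by (metis properties_for_sort)
  then show ?thesis by simp
qed

lemma signs_nth: "x \<in> signs n \<Longrightarrow> i < n \<Longrightarrow> x ! i \<in> {-1, 1}"
  unfolding signs_def using nth_mem by blast

lemma partition_hd_pos: "is_partition w \<Longrightarrow> hd w \<ge> 1"
  by (cases w) (auto simp: is_partition_def)

lemma scaled_partition:
  assumes "is_partition w" "t > 0" shows "is_partition (map ((*) t) w)"
proof -
  have "sorted_wrt (\<lambda>x y. t * y \<le> t * x) w" using assms
    by (auto simp: is_partition_def intro: sorted_wrt_mono_rel[of _ "(\<ge>)"])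
  then show ?thesis using assms
    by (auto simp: is_partition_def sorted_wrt_map) (smt (verit) mult_pos_pos)
qed

lemma Vset_self: "is_partition w \<Longrightarrow> w \<in> Vset w"
proof -
  assume w: "is_partition w"
  then have "map abs w = w" by (induction w) (auto simp: is_partition_def)
  then have "mset (map abs w) = mset w" by (rule arg_cong)
  moreover have "w \<noteq> []" using w by (simp add: is_partition_def)
  moreover have "hd w > 0" using partition_hd_pos[OF w] by simp
  ultimately show ?thesis unfolding Vset_def by blast
qed

lemma Vset_nonzero: "is_partition mu \<Longrightarrow> v \<in> Vset mu \<Longrightarrow> 0 \<notin> set v"
proof
  assume mu: "is_partition mu" and v: "v \<in> Vset mu" and "0 \<in> set v"
  then have "0 \<in> abs ` set v" by force
  also have "abs ` set v = set mu"
    using v mset_eq_setD[of "map abs v" mu] by (simp add: Vset_def del: mset_map)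
  finally show False using mu by (auto simp: is_partition_def)
qed

text \<open>If a multiple t\<cdot>w of a partition w is a signed rearrangement of a partition \<mu>, then t is
  positive and \<mu> = t\<cdot>w: the positive first coordinate fixes the sign, sortedness the order.\<close>

lemma Vset_scaled_partition:
  assumes mu: "is_partition mu" and w: "is_partition w" and v: "map ((*) t) w \<in> Vset mu"
  shows "t > 0 \<and> mu = map ((*) t) w"
proof -
  have "t * hd w > 0" using v w by (auto simp: Vset_def hd_map is_partition_def)
  then have t: "t > 0" using partition_hd_pos[OF w] by (simp add: zero_less_mult_iff)
  have "mset mu = mset (map abs (map ((*) t) w))" using v by (simp add: Vset_def del: mset_map)
  also have "map abs (map ((*) t) w) = map ((*) t) w"
    using w t by (auto simp: is_partition_def abs_mult)
  finally have "mset mu = mset (map ((*) t) w)" .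
  moreover have "sorted_wrt (\<ge>) mu" "sorted_wrt (\<ge>) (map ((*) t) w)"
    using mu scaled_partition[OF w t] by (simp_all add: is_partition_def)
  ultimately have "mu = map ((*) t) w" by (intro sorted_desc_mset_unique)
  then show ?thesis using t by simp
qed

text \<open>The basic obstruction to novelty: if two coordinates i < j have a constant product s on \<lambda>^\<perp>B,
  then projecting onto {i, j} lands in (1, -s)^\<perp>B, so \<lambda> reduces to (1,1); the converse reduction
  is impossible as soon as \<lambda> has more than two parts.\<close>

lemma pair_reduction:
  assumes "length l > 2" "i < j" "j < length l" "s \<in> {-1, 1}"
    and forced: "\<forall>x\<in>perpB l. x ! i * x ! j = s"
  shows "strictly_reduces l [1, 1]"
proof -
  have target: "[1, -s] \<in> Vset [1, 1]" using assms(4) by (auto simp: Vset_def)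
  have "Proj {i, j} x \<in> perpB [1, -s]" if x: "x \<in> perpB l" for x
  proof -
    have "x ! i \<in> {-1, 1}" "x ! j \<in> {-1, 1}" "length x = length l"
      using x assms(2,3) signs_nth by (auto simp: perpB_def signs_def)
    moreover have "x ! i * x ! j = s" using forced x by blast
    moreover have "Proj {i, j} x = [x ! i, x ! j]"
      using assms(2,3) \<open>length x = length l\<close> by (simp add: Proj_def nths_pair)
    ultimately show ?thesis using assms(4) by (auto simp: perpB_def signs_def dotp_def)
  qed
  then have "reduces l [1, 1]"
    unfolding reduces_def using assms(1-3) target
    by (intro conjI exI[of _ "{i, j}"] bexI[of _ "[1, -s]"]) auto
  moreover have "\<not> reduces [1, 1] l" using assms(1) by (simp add: reduces_def)
  ultimately show ?thesis by (simp add: strictly_reduces_def)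
qed

text \<open>A partition is reduced to by each of its nonzero multiples and is equivalent to them,
  since both have the same balanced sign vectors.\<close>

lemma reduces_from_scaled:
  assumes "is_partition w" "t \<noteq> 0" shows "map ((*) t) w \<Rrightarrow> w"
proof -
  have "Proj {..<length w} x \<in> perpB w" if "x \<in> perpB (map ((*) t) w)" for x
  proof -
    have x: "x \<in> perpB w" using that perpB_scale[OF assms(2)] by simp
    then have "length x = length w" by (simp add: perpB_def signs_def)
    then show ?thesis using x Proj_all[of x] by simp
  qed
  then show ?thesis unfolding reduces_def using Vset_self[OF assms(1)]
    by (intro conjI exI[of _ "{..<length w}"] bexI[of _ w]) auto
qed

lemma equivalent_to_scaled:
  assumes "is_partition w" "t \<noteq> 0" shows "equivalent (map ((*) t) w) w"
  using assms Vset_self perpB_scale by (auto simp: equivalent_def)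

lemma lex_le_scaled:
  assumes "is_partition w"
  shows "t \<ge> 1 \<Longrightarrow> lex_le w (map ((*) t) w)"
    and "t > 1 \<Longrightarrow> \<not> lex_le (map ((*) t) w) w"
proof -
  obtain h r where w: "w = h # r" "h \<ge> 1" using assms by (cases w) (auto simp: is_partition_def)
  show "t \<ge> 1 \<Longrightarrow> lex_le w (map ((*) t) w)"
    using w by (cases "t = 1") (auto simp: lex_le_def map_idI)
  show "t > 1 \<Longrightarrow> \<not> lex_le (map ((*) t) w) w"
    using w by (auto simp: lex_le_def)
qed

lemma length5_cases:
  assumes "length (x :: 'a list) = 5" obtains x0 x1 x2 x3 x4 where "x = [x0, x1, x2, x3, x4]"
  using assms by (auto simp: numeral_eq_Suc length_Suc_conv)

lemma perpB5_elim:
  assumes "x \<in> perpB [a, b, c, d, e]"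
  obtains x0 x1 x2 x3 x4 where "x = [x0, x1, x2, x3, x4]"
    "x0 \<in> {-1, 1}" "x1 \<in> {-1, 1}" "x2 \<in> {-1, 1}" "x3 \<in> {-1, 1}" "x4 \<in> {-1, 1}"
    "a * x0 + b * x1 + c * x2 + d * x3 + e * x4 = 0"
proof -
  have "length x = 5" "set x \<subseteq> {-1, 1}" "dotp [a, b, c, d, e] x = 0"
    using assms by (auto simp: perpB_def signs_def)
  then show ?thesis using that by (auto simp: numeral_eq_Suc length_Suc_conv dotp_def)
qed

text \<open>For instance x0 = x1 would force a + b = |c x2 + d x3 + e x4|; as a + b \<ge> 2c \<ge> c + d, this
  needs x2 = x3 = x4 and hence a + b = c + d + e.\<close>

lemma forced_sign_products:
  fixes a b c d e x0 x1 x2 x3 x4 :: int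
  assumes ord: "a \<ge> b" "b \<ge> c" "c \<ge> d" "d \<ge> e" "e \<ge> 1"
    and signs: "x0 \<in> {-1, 1}" "x1 \<in> {-1, 1}" "x2 \<in> {-1, 1}" "x3 \<in> {-1, 1}" "x4 \<in> {-1, 1}"
    and perp: "a * x0 + b * x1 + c * x2 + d * x3 + e * x4 = 0"
  shows "a + b \<noteq> c + d + e \<Longrightarrow> x0 * x1 = -1"
    and "a + b = c + d + e \<Longrightarrow> c < b \<Longrightarrow> x1 * x2 = -1"
    and "a + b = c + d + e \<Longrightarrow> c = b \<Longrightarrow> d < b \<Longrightarrow> x3 * x4 = 1"
    and "a + b = c + d + e \<Longrightarrow> c = b \<Longrightarrow> d = b \<Longrightarrow> e < b \<Longrightarrow> x0 * x4 = -1"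
  using assms by auto

lemma forced_pair5:
  fixes a b c d e :: int
  assumes "is_partition [a, b, c, d, e]" "[a, b, c, d, e] \<noteq> map ((*) b) [2, 1, 1, 1, 1]"
  obtains i j s where "i < j" "j < 5" "s \<in> {-1, 1}"
    "\<forall>x\<in>perpB [a, b, c, d, e]. x ! i * x ! j = s"
proof -
  have ord: "a \<ge> b" "b \<ge> c" "c \<ge> d" "d \<ge> e" "e \<ge> 1"
    using assms(1) by (auto simp: is_partition_def)
  have forced: "\<forall>x\<in>perpB [a, b, c, d, e]. x ! i * x ! j = s"
    if "\<And>x0 x1 x2 x3 x4. x0 \<in> {-1, 1} \<Longrightarrow> x1 \<in> {-1, 1} \<Longrightarrow> x2 \<in> {-1, 1} \<Longrightarrow>
      x3 \<in> {-1, 1} \<Longrightarrow> x4 \<in> {-1, 1} \<Longrightarrow> a * x0 + b * x1 + c * x2 + d * x3 + e * x4 = 0 \<Longrightarrow>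
      [x0, x1, x2, x3, x4] ! i * [x0, x1, x2, x3, x4] ! j = s" for i j s
    using that by (metis perpB5_elim)
  consider "a + b \<noteq> c + d + e" | "a + b = c + d + e" "c < b"
    | "a + b = c + d + e" "c = b" "d < b" | "a + b = c + d + e" "c = b" "d = b" "e < b"
    using ord assms(2) by fastforce
  then show ?thesis
  proof cases
    case 1
    then show ?thesis
      using that[of 0 1 "-1"] forced[of 0 1 "-1"] forced_sign_products(1)[OF ord] by simp
  next
    case 2
    then show ?thesis
      using that[of 1 2 "-1"] forced[of 1 2 "-1"] forced_sign_products(2)[OF ord] by simp
  next
    case 3
    then show ?thesis
      using that[of 3 4 1] forced[of 3 4 1] forced_sign_products(3)[OF ord] by simp
  next
    case 4
    then show ?thesis
      using that[of 0 4 "-1"] forced[of 0 4 "-1"] forced_sign_products(4)[OF ord] by simp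
  qed
qed

text \<open>Uniqueness: a novel partition of length five is a multiple b\<cdot>(2,1,1,1,1) by the previous
  lemma, and lexicographic minimality among equivalent partitions forces b = 1.\<close>

lemma novel_length5_unique:
  assumes l: "is_partition l" "length l = 5" "novel l"
  shows "l = [2, 1, 1, 1, 1]"
proof -
  obtain a b c d e where abcde: "l = [a, b, c, d, e]" using l(2) by (rule length5_cases)
  have "is_partition [1, 1]" by (simp add: is_partition_def)
  then have no_pair: "\<not> strictly_reduces l [1, 1]" using l(3) unfolding novel_def by blast
  have scaled: "l = map ((*) b) [2, 1, 1, 1, 1]"
  proof (rule ccontr)
    assume "l \<noteq> map ((*) b) [2, 1, 1, 1, 1]"
    then have "is_partition [a, b, c, d, e]" "[a, b, c, d, e] \<noteq> map ((*) b) [2, 1, 1, 1, 1]"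
      using l(1) abcde by simp_all
    then obtain i j s where "i < j" "j < 5" "s \<in> {-1, 1}"
      "\<forall>x\<in>perpB [a, b, c, d, e]. x ! i * x ! j = s"
      by (rule forced_pair5)
    then show False using pair_reduction[of l i j s] l(2) abcde no_pair by simp
  qed
  have "b \<ge> 1" using l(1) abcde by (auto simp: is_partition_def)
  moreover have "\<not> b > 1"
  proof
    assume "b > 1"
    then have "equivalent l [2, 1, 1, 1, 1]"
      using scaled equivalent_to_scaled[of "[2, 1, 1, 1, 1]" b] by (simp add: is_partition_def)
    moreover have "is_partition [2, 1, 1, 1, 1]" by (simp add: is_partition_def)
    ultimately have "lex_le l [2, 1, 1, 1, 1]" using l(2,3) unfolding novel_def by auto
    then show False
      using \<open>b > 1\<close> scaled lex_le_scaled(2)[of "[2, 1, 1, 1, 1]" b] by (simp add: is_partition_def)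
  qed
  ultimately show ?thesis using scaled by simp
qed

lemma in_perpB_2_1_1_1_1:
  "[1, 1, -1, -1, -1] \<in> perpB [2, 1, 1, 1, 1]" "[1, -1, 1, -1, -1] \<in> perpB [2, 1, 1, 1, 1]"
  "[1, -1, -1, 1, -1] \<in> perpB [2, 1, 1, 1, 1]" "[1, -1, -1, -1, 1] \<in> perpB [2, 1, 1, 1, 1]"
  by (auto simp: perpB_def signs_def dotp_def)

lemma perpB_superset_2_1_1_1_1:
  assumes "length v = 5" "perpB [2, 1, 1, 1, 1] \<subseteq> perpB v"
  obtains t where "v = map ((*) t) [2, 1, 1, 1, 1]"
proof -
  obtain v0 v1 v2 v3 v4 where v: "v = [v0, v1, v2, v3, v4]" using assms(1) by (rule length5_cases)
  have "dotp v [1, 1, -1, -1, -1] = 0" "dotp v [1, -1, 1, -1, -1] = 0"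
    "dotp v [1, -1, -1, 1, -1] = 0" "dotp v [1, -1, -1, -1, 1] = 0"
    using assms(2) in_perpB_2_1_1_1_1 by (auto simp: perpB_def)
  then have "v = map ((*) v4) [2, 1, 1, 1, 1]" using v by (simp add: dotp_def)
  then show ?thesis by (rule that)
qed

lemma Vset_perpB_superset_2_1_1_1_1:
  assumes "is_partition mu" "v \<in> Vset mu" "length v = 5" "perpB [2, 1, 1, 1, 1] \<subseteq> perpB v"
  shows "\<exists>t > 0. mu = map ((*) t) [2, 1, 1, 1, 1]"
proof -
  obtain t where "v = map ((*) t) [2, 1, 1, 1, 1]"
    using perpB_superset_2_1_1_1_1[OF assms(3,4)] by blast
  then have "map ((*) t) [2, 1, 1, 1, 1] \<in> Vset mu" using assms(2) by simp
  moreover have "is_partition [2, 1, 1, 1, 1]" by (simp add: is_partition_def)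
  ultimately show ?thesis using Vset_scaled_partition[OF assms(1)] by blast
qed

lemma Proj5:
  "Proj I [x0, x1, x2, x3, x4] = (if 0 \<in> I then [x0] else []) @ (if 1 \<in> I then [x1] else [])
     @ (if 2 \<in> I then [x2] else []) @ (if 3 \<in> I then [x3] else []) @ (if 4 \<in> I then [x4] else [])"
  by (simp add: Proj_def nths_Cons numeral_eq_Suc)

text \<open>No projection of the four witnesses above to fewer than five coordinates is balanced by a
  weight vector without zero entries: if some coordinate j \<ge> 1 is dropped while another k \<ge> 1 is
  kept, the projections of the witnesses for j and k differ only at k, forcing the k-th weight
  to vanish; the index sets {0} and {1,2,3,4} are excluded directly.\<close>

lemma no_shorter_target_2_1_1_1_1:
  assumes "length v < 5" "v \<noteq> []" "0 \<notin> set v"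
    and "Proj I ` perpB [2, 1, 1, 1, 1] \<subseteq> perpB v"
  shows False
proof -
  have "length v = length (Proj I x) \<and> dotp v (Proj I x) = 0" if "x \<in> perpB [2, 1, 1, 1, 1]" for x
    using assms(4) that by (auto simp: perpB_def signs_def)
  note witnesses = this[OF in_perpB_2_1_1_1_1(1)] this[OF in_perpB_2_1_1_1_1(2)]
    this[OF in_perpB_2_1_1_1_1(3)] this[OF in_perpB_2_1_1_1_1(4)]
  show False
    using witnesses assms(1-3)
    by (cases "0 \<in> I"; cases "1 \<in> I"; cases "2 \<in> I"; cases "3 \<in> I"; cases "4 \<in> I";
        auto simp: Proj5 length_Suc_conv dotp_def)
qed

text \<open>Existence: (2,1,1,1,1) is novel. A strict reduction cannot go to fewer parts by the previous
  lemma, and a reduction to five parts is a reduction to a multiple, which reduces back.\<close>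

lemma novel_2_1_1_1_1: "novel [2, 1, 1, 1, 1]"
  unfolding novel_def
proof (intro conjI notI allI impI)
  show "is_partition [2, 1, 1, 1, 1]" by (simp add: is_partition_def)
  show "perpB [2, 1, 1, 1, 1] = {} \<Longrightarrow> False" using in_perpB_2_1_1_1_1(1) by auto
next
  fix mu assume "is_partition mu \<and> length mu = length [2 :: int, 1, 1, 1, 1]
    \<and> equivalent [2, 1, 1, 1, 1] mu"
  then obtain w where "is_partition mu" "w \<in> Vset mu" "length w = 5"
    "perpB [2, 1, 1, 1, 1] = perpB w"
    by (auto simp: equivalent_def Vset_def)
  then obtain t where "t > 0" "mu = map ((*) t) [2, 1, 1, 1, 1]"
    using Vset_perpB_superset_2_1_1_1_1[of mu w] by auto
  then show "lex_le [2, 1, 1, 1, 1] mu"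
    using lex_le_scaled(1)[of "[2, 1, 1, 1, 1]" t] by (simp add: is_partition_def)
next
  assume "\<exists>mu. is_partition mu \<and> strictly_reduces [2, 1, 1, 1, 1] mu"
  then obtain mu where mu: "is_partition mu" "[2, 1, 1, 1, 1] \<Rrightarrow> mu" "\<not> mu \<Rrightarrow> [2, 1, 1, 1, 1]"
    by (auto simp: strictly_reduces_def)
  have len5: "length [2 :: int, 1, 1, 1, 1] = 5" by simp
  from mu(2)[unfolded reduces_def len5] obtain I v where "length mu \<le> 5"
    and I: "I \<subseteq> {..<5}" "card I = length mu" and v: "v \<in> Vset mu"
    and proj: "Proj I ` perpB [2, 1, 1, 1, 1] \<subseteq> perpB v"
    by blast
  have lv: "length v = length mu" "v \<noteq> []" using v by (simp_all add: Vset_def)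
  show False
  proof (cases "length mu = 5")
    case True
    then have I_all: "I = {..<5}" using I card_subset_eq[of "{..<5}" I] by simp
    have "x \<in> perpB v" if x: "x \<in> perpB [2, 1, 1, 1, 1]" for x
    proof -
      have "length x = 5" using x by (simp add: perpB_def signs_def)
      then have "Proj I x = x" using I_all Proj_all[of x] by simp
      then show ?thesis using proj x by force
    qed
    then have "perpB [2, 1, 1, 1, 1] \<subseteq> perpB v" ..
    then obtain t where "t > 0" "mu = map ((*) t) [2, 1, 1, 1, 1]"
      using Vset_perpB_superset_2_1_1_1_1[OF mu(1) v] lv True by auto
    then show False
      using mu(3) reduces_from_scaled[of "[2, 1, 1, 1, 1]" t] by (simp add: is_partition_def)
  next
    case False
    then show False
      using no_shorter_target_2_1_1_1_1[OF _ lv(2) Vset_nonzero[OF mu(1) v] proj]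
        lv(1) \<open>length mu \<le> 5\<close> by simp
  qed
qed

theorem mainTheorem9:
  shows "{l. is_partition l \<and> length l = 5 \<and> novel l} = {[2, 1, 1, 1, 1]}"
proof (intro equalityI subsetI)
  fix l :: "int list" assume "l \<in> {l. is_partition l \<and> length l = 5 \<and> novel l}"
  then show "l \<in> {[2, 1, 1, 1, 1]}" using novel_length5_unique by simp
next
  fix l :: "int list" assume "l \<in> {[2, 1, 1, 1, 1]}"
  then show "l \<in> {l. is_partition l \<and> length l = 5 \<and> novel l}"
    using novel_2_1_1_1_1 by (simp add: is_partition_def)
qed

end
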